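(* Let $\sigma$ be an erasing $k$-block substitution with $w_\epsilon\ne1^k$ that satisfies the optimality condition. Then for every $x\in\mathbb I$ the fiber $f_\sigma^{-1}(x)$ is uncountable.
   Context: Notation: $\mathbb I=[0,1]$. $\{0,1\}^*$ and $\{0,1\}^\omega$ denote finite and infinite binary words, and $\epsilon$ is the empty word. For a word $w$, set $0.w=\sum_iw_i2^{-i}$. For $x\in(0,1]$, $\widetilde x$ is the unique infinite binary expansion of $x$ not ending in $0^\infty$. Fix $k\ge2$. An erasing $k$-block substitution is a map $\sigma:\{0,1\}^k\to\{0,1\}^*$ with exactly one block $w_\epsilon$ such that $\sigma(w_\epsilon)=\epsilon$. It acts blockwise on infinite words, concatenating the images of consecutive $k$-blocks. The map $f_\sigma:\mathbb I\to\mathbb I$ is defined by $f_\sigma(x)=0.\sigma(\widetilde x)$ if $x\in(0,1]$ and $\widetilde x\neq w_\epsilon^\infty$, and $f_\sigma(x)=0$ otherwise. Optimality condition: every $w\in\{0,1\}^\omega$ can be written as $w=\prod_{i\ge1}\sigma(b_i)$ with blocks $b_i\in\{0,1\}^k$ satisfying $\sigma(b_i)\ne\epsilon$. *)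

theory Defs
  imports Complex_Main "HOL-Library.Countable_Set"
begin

text \<open>Finite binary words are \<open>bool list\<close> (True = 1, False = 0);
infinite binary words are \<open>nat \<Rightarrow> bool\<close>, letter i of the paper is position i-1 here.\<close>

definition bval :: "(nat \<Rightarrow> bool) \<Rightarrow> real" where
  "bval u = (\<Sum>n. (if u n then 1 else 0) / 2 ^ Suc n)"

definition binexp :: "real \<Rightarrow> (nat \<Rightarrow> bool)" where
  "binexp x = (THE u. (\<forall>n. \<exists>m\<ge>n. u m) \<and> bval u = x)"

text \<open>Concatenation of a sequence of finite words. If the concatenation is a finite
word, it is padded with zeros (which does not change its binary value 0.w).\<close>
definition concat_word :: "(nat \<Rightarrow> bool list) \<Rightarrow> (nat \<Rightarrow> bool)" where
  "concat_word ws n =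
     (if \<exists>m. n < length (concat (map ws [0..<m]))
      then concat (map ws [0..<(LEAST m. n < length (concat (map ws [0..<m])))]) ! n
      else False)"

definition block :: "nat \<Rightarrow> (nat \<Rightarrow> bool) \<Rightarrow> nat \<Rightarrow> bool list" where
  "block k u i = map (\<lambda>j. u (k * i + j)) [0..<k]"

definition subst_inf :: "nat \<Rightarrow> (bool list \<Rightarrow> bool list) \<Rightarrow> (nat \<Rightarrow> bool) \<Rightarrow> (nat \<Rightarrow> bool)" where
  "subst_inf k \<sigma> u = concat_word (\<lambda>i. \<sigma> (block k u i))"

text \<open>sigma (only its values on words of length k matter) is an erasing k-block substitution.\<close>
definition erasing_block_subst :: "nat \<Rightarrow> (bool list \<Rightarrow> bool list) \<Rightarrow> bool" where
  "erasing_block_subst k \<sigma> \<longleftrightarrow> k \<ge> 2 \<and> (\<exists>!w. length w = k \<and> \<sigma> w = [])"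

definition w_eps :: "nat \<Rightarrow> (bool list \<Rightarrow> bool list) \<Rightarrow> bool list" where
  "w_eps k \<sigma> = (THE w. length w = k \<and> \<sigma> w = [])"

definition f_sigma :: "nat \<Rightarrow> (bool list \<Rightarrow> bool list) \<Rightarrow> real \<Rightarrow> real" where
  "f_sigma k \<sigma> x =
     (if 0 < x \<and> x \<le> 1 \<and> binexp x \<noteq> (\<lambda>n. w_eps k \<sigma> ! (n mod k))
      then bval (subst_inf k \<sigma> (binexp x)) else 0)"

definition optimal :: "nat \<Rightarrow> (bool list \<Rightarrow> bool list) \<Rightarrow> bool" where
  "optimal k \<sigma> \<longleftrightarrow>
     (\<forall>w :: nat \<Rightarrow> bool. \<exists>b :: nat \<Rightarrow> bool list.
        (\<forall>i. length (b i) = k \<and> \<sigma> (b i) \<noteq> []) \<and> w = concat_word (\<lambda>i. \<sigma> (b i)))"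

end

theory Submission
  imports Defs
begin

text \<open>Fix \<open>x\<close>, a binary expansion \<open>w\<close> of \<open>x\<close>, and by optimality a factorisation
  \<open>w = \<sigma>(b\<^sub>0) \<sigma>(b\<^sub>1) \<dots>\<close> into non-erased blocks. For every \<open>c \<in> {0,1}\<^sup>\<omega>\<close> insert the erased
  block \<open>w\<^sub>\<epsilon>\<close> after or before each \<open>b\<^sub>j\<close>, according to \<open>c\<^sub>j\<close>. The resulting words all map to
  \<open>w\<close> under \<open>\<sigma>\<close> and are pairwise distinct. Each of them contains infinitely many ones (of the
  two distinct blocks \<open>b\<^sub>j\<close>, \<open>w\<^sub>\<epsilon>\<close> one contains a one), so it is the expansion \<open>binexp\<close> selects
  for its value, and it is not \<open>w\<^sub>\<epsilon>\<^sup>\<omega>\<close>. Hence \<open>c\<close> maps injectively into the fibre over \<open>x\<close>.\<close>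

lemma uncountable_UNIV_nat_bool: "uncountable (UNIV :: (nat \<Rightarrow> bool) set)"
proof
  assume "countable (UNIV :: (nat \<Rightarrow> bool) set)"
  then obtain n where "from_nat_into UNIV n = (\<lambda>m. \<not> from_nat_into UNIV m m)"
    using from_nat_into_surj[of "UNIV :: (nat \<Rightarrow> bool) set" "\<lambda>m. \<not> from_nat_into UNIV m m"]
    by blast
  then have "from_nat_into UNIV n n = (\<not> from_nat_into UNIV n n)" by (rule fun_cong)
  then show False by simp
qed

definition concat_prefix :: "(nat \<Rightarrow> 'a list) \<Rightarrow> nat \<Rightarrow> 'a list" where
  "concat_prefix ws m = concat (map ws [0..<m])"

lemma concat_prefix_append:
  "m \<le> m' \<Longrightarrow> concat_prefix ws m' = concat_prefix ws m @ concat (map ws [m..<m'])"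
proof -
  assume "m \<le> m'"
  then have "[0..<m'] = [0..<m] @ [m..<m']"
    using upt_add_eq_append[of 0 m "m' - m"] by simp
  then show ?thesis unfolding concat_prefix_def by simp
qed

lemma concat_prefix_Suc: "concat_prefix ws (Suc m) = concat_prefix ws m @ ws m"
  by (simp add: concat_prefix_def)

lemma concat_word_nth:
  assumes "n < length (concat_prefix ws m)"
  shows "concat_word ws n = concat_prefix ws m ! n"
proof -
  define l where "l = (LEAST m. n < length (concat_prefix ws m))"
  have l: "n < length (concat_prefix ws l)" "l \<le> m"
    unfolding l_def using assms by (auto intro: LeastI Least_le)
  have "concat_word ws n = concat_prefix ws l ! n"
    using assms unfolding concat_word_def l_def concat_prefix_def by auto
  also have "\<dots> = concat_prefix ws m ! n"
    using l by (simp add: concat_prefix_append[OF \<open>l \<le> m\<close>] nth_append)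
  finally show ?thesis .
qed

lemma concat_word_regroup:
  assumes "\<And>j. j \<le> g j" and "\<And>j. concat_prefix ws (g j) = concat_prefix vs j"
  shows "concat_word ws = concat_word vs"
proof
  fix n
  have defined_iff: "(\<exists>m. n < length (concat_prefix ws m)) \<longleftrightarrow> (\<exists>m. n < length (concat_prefix vs m))"
  proof
    assume "\<exists>m. n < length (concat_prefix ws m)"
    then obtain m where "n < length (concat_prefix ws m)" by blast
    then have "n < length (concat_prefix ws (g m))"
      by (simp add: concat_prefix_append[OF assms(1)])
    then show "\<exists>m. n < length (concat_prefix vs m)" using assms(2) by metis
  next
    assume "\<exists>m. n < length (concat_prefix vs m)"
    then show "\<exists>m. n < length (concat_prefix ws m)" using assms(2) by metis
  qed
  show "concat_word ws n = concat_word vs n"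
  proof (cases "\<exists>m. n < length (concat_prefix vs m)")
    case True
    then obtain m where "n < length (concat_prefix vs m)" by blast
    then show ?thesis using concat_word_nth assms(2) by metis
  next
    case False
    then show ?thesis using defined_iff unfolding concat_word_def concat_prefix_def by simp
  qed
qed

definition digit_weight :: "(nat \<Rightarrow> bool) \<Rightarrow> nat \<Rightarrow> real" where
  "digit_weight u n = of_bool (u n) / 2 ^ Suc n"

lemma digit_weight_nonneg: "0 \<le> digit_weight u n"
  by (simp add: digit_weight_def)

lemma digit_weight_le: "digit_weight u n \<le> (1/2) ^ Suc n"
proof -
  have "digit_weight u n \<le> 1 / 2 ^ Suc n"
    unfolding digit_weight_def by (auto simp del: power_Suc)
  then show ?thesis by (simp only: power_one_over)
qed

lemma summable_digit_weight: "summable (digit_weight u)"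
proof (rule summable_comparison_test)
  show "summable (\<lambda>n. (1/2::real) ^ Suc n)" by (simp add: summable_geometric)
qed (use digit_weight_nonneg digit_weight_le in auto)

lemma bval_eq_suminf: "bval u = (\<Sum>n. digit_weight u n)"
  by (simp add: bval_def digit_weight_def of_bool_def)

lemma suminf_half_power_tail: "(\<Sum>m. (1/2::real) ^ Suc (m + n)) = (1/2) ^ n"
proof -
  have "(\<Sum>m. (1/2::real) ^ Suc (m + n)) = (\<Sum>m. (1/2) ^ Suc n * (1/2) ^ m)"
    by (simp add: power_add mult.commute)
  also have "\<dots> = (1/2) ^ Suc n * 2"
    by (subst suminf_mult) (auto simp: suminf_geometric summable_geometric)
  finally show ?thesis by simp
qed

lemma summable_half_power_Suc: "summable (\<lambda>n. (1/2::real) ^ Suc (n + k))"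
  using summable_iff_shift[of "\<lambda>n. (1/2::real) ^ Suc n" k] by (simp add: summable_geometric)

lemma bval_le_1: "bval u \<le> 1"
proof -
  have "bval u \<le> (\<Sum>n. (1/2::real) ^ Suc (n + 0))"
    unfolding bval_eq_suminf
    by (intro suminf_le summable_digit_weight summable_half_power_Suc)
      (metis add_0_right digit_weight_le)
  also have "\<dots> = 1" using suminf_half_power_tail[of 0] by simp
  finally show ?thesis .
qed

lemma bval_pos: "u m \<Longrightarrow> 0 < bval u"
  unfolding bval_eq_suminf
  by (rule suminf_pos2[of _ m]) (auto simp: summable_digit_weight digit_weight_nonneg digit_weight_def)

lemma bval_const_True: "bval (\<lambda>_. True) = 1"
  using suminf_half_power_tail[of 0] by (simp add: bval_def power_one_over)

lemma bval_less:
  assumes "\<forall>m<n. u m = v m" "u n" "\<not> v n" "\<exists>m>n. u m"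
  shows "bval v < bval u"
proof -
  have split: "bval w = (\<Sum>i. digit_weight w (i + Suc n)) + (\<Sum>i<Suc n. digit_weight w i)" for w
    unfolding bval_eq_suminf by (rule suminf_split_initial_segment[OF summable_digit_weight])
  have tail_summable: "summable (\<lambda>i. digit_weight w (i + Suc n))" for w
    using summable_iff_shift[of "digit_weight w" "Suc n"] summable_digit_weight by simp
  obtain m where "m > n" "u m" using assms(4) by blast
  then have "0 < (\<Sum>i. digit_weight u (i + Suc n))"
    by (intro suminf_pos2[of _ "m - Suc n"] tail_summable)
      (auto simp: digit_weight_nonneg digit_weight_def)
  moreover have "(\<Sum>i. digit_weight v (i + Suc n)) \<le> (1/2) ^ Suc n"
    unfolding suminf_half_power_tail[of "Suc n", symmetric]
    by (intro suminf_le tail_summable summable_half_power_Suc digit_weight_le)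
  moreover have "(\<Sum>i<Suc n. digit_weight u i) = (\<Sum>i<Suc n. digit_weight v i) + (1/2) ^ Suc n"
    using assms(1-3) by (simp add: digit_weight_def power_one_over)
  ultimately show ?thesis using split[of u] split[of v] by linarith
qed

lemma bval_inject:
  assumes "\<forall>n. \<exists>m\<ge>n. u m" "\<forall>n. \<exists>m\<ge>n. v m" "bval u = bval v"
  shows "u = v"
proof (rule ccontr)
  assume "u \<noteq> v"
  then have ex: "\<exists>n. u n \<noteq> v n" by auto
  define n where "n = (LEAST n. u n \<noteq> v n)"
  have "u n \<noteq> v n" "\<forall>m<n. u m = v m"
    unfolding n_def using LeastI_ex[OF ex] not_less_Least by auto
  moreover have "\<exists>m>n. u m" "\<exists>m>n. v m"
    using assms(1,2)[rule_format, of "Suc n"] by (meson Suc_le_lessD)+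
  ultimately have "bval v < bval u \<or> bval u < bval v"
    using bval_less[of n u v] bval_less[of n v u] by (cases "u n") auto
  then show False using assms(3) by simp
qed

lemma binexp_bval:
  assumes "\<forall>n. \<exists>m\<ge>n. u m"
  shows "binexp (bval u) = u"
  unfolding binexp_def by (rule the_equality) (use assms bval_inject in auto)

lemma floor_double: "\<lfloor>2 * y\<rfloor> = 2 * \<lfloor>y\<rfloor> + of_bool (odd \<lfloor>2 * y\<rfloor>)" for y :: real
proof -
  have "2 * \<lfloor>y\<rfloor> \<le> \<lfloor>2 * y\<rfloor>" "\<lfloor>2 * y\<rfloor> < 2 * \<lfloor>y\<rfloor> + 2"
    by linarith+
  then show ?thesis unfolding of_bool_def by presburger
qed

lemma sum_digit_weight_floor:
  assumes "0 \<le> x" "x < (1::real)"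
  shows "(\<Sum>n<N. digit_weight (\<lambda>n. odd \<lfloor>x * 2 ^ Suc n\<rfloor>) n) = \<lfloor>x * 2 ^ N\<rfloor> / 2 ^ N"
proof (induction N)
  case 0
  then show ?case using assms by (simp add: floor_eq_iff)
next
  case (Suc N)
  define d where "d = odd \<lfloor>x * 2 ^ Suc N\<rfloor>"
  have "\<lfloor>x * 2 ^ Suc N\<rfloor> = 2 * \<lfloor>x * 2 ^ N\<rfloor> + of_bool d"
    using floor_double[of "x * 2 ^ N"] unfolding d_def by (simp add: mult_ac)
  then have "(real_of_int \<lfloor>x * 2 ^ Suc N\<rfloor>) / 2 ^ Suc N = \<lfloor>x * 2 ^ N\<rfloor> / 2 ^ N + of_bool d / 2 ^ Suc N"
    by (simp add: field_simps)
  then show ?case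
    using Suc by (simp add: digit_weight_def d_def)
qed

lemma ex_bval_eq:
  assumes "0 \<le> x" "x \<le> (1::real)"
  shows "\<exists>u. bval u = x"
proof (cases "x = 1")
  case True
  \<comment> \<open>the greedy digits below would give the value 0 here\<close>
  then show ?thesis using bval_const_True by blast
next
  case False
  then have "x < 1" using assms by simp
  have "(\<lambda>N. \<lfloor>x * 2 ^ N\<rfloor> / 2 ^ N) \<longlonglongrightarrow> x"
  proof (rule tendsto_sandwich)
    show "\<forall>\<^sub>F N in sequentially. x - (1/2) ^ N \<le> \<lfloor>x * 2 ^ N\<rfloor> / 2 ^ N"
    proof (intro always_eventually allI)
      fix N :: nat
      have "(x * 2 ^ N - 1) / 2 ^ N \<le> \<lfloor>x * 2 ^ N\<rfloor> / 2 ^ N"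
        by (intro divide_right_mono) (linarith, simp)
      then show "x - (1/2) ^ N \<le> \<lfloor>x * 2 ^ N\<rfloor> / 2 ^ N"
        by (simp add: field_simps power_one_over)
    qed
    show "\<forall>\<^sub>F N in sequentially. \<lfloor>x * 2 ^ N\<rfloor> / 2 ^ N \<le> x"
      by (intro always_eventually allI) (simp add: field_simps)
    show "(\<lambda>N. x - (1/2::real) ^ N) \<longlonglongrightarrow> x"
      using tendsto_diff[OF tendsto_const LIMSEQ_power_zero[of "1/2::real"]] by simp
  qed simp
  then have "digit_weight (\<lambda>n. odd \<lfloor>x * 2 ^ Suc n\<rfloor>) sums x"
    unfolding sums_def sum_digit_weight_floor[OF assms(1) \<open>x < 1\<close>] .
  then show ?thesis by (metis bval_eq_suminf sums_unique)
qed

definition blocks_word :: "nat \<Rightarrow> (nat \<Rightarrow> bool list) \<Rightarrow> nat \<Rightarrow> bool" where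
  "blocks_word k bs m = bs (m div k) ! (m mod k)"

lemma blocks_word_nth: "j < k \<Longrightarrow> blocks_word k bs (k * i + j) = bs i ! j"
  by (simp add: blocks_word_def)

lemma block_blocks_word: "length (bs i) = k \<Longrightarrow> block k (blocks_word k bs) i = bs i"
  by (intro nth_equalityI) (auto simp: block_def blocks_word_nth)

lemma subst_inf_blocks_word:
  "(\<And>i. length (bs i) = k) \<Longrightarrow> subst_inf k \<sigma> (blocks_word k bs) = concat_word (\<lambda>i. \<sigma> (bs i))"
  by (simp add: subst_inf_def block_blocks_word)

lemma blocks_word_inject:
  assumes "\<And>i. length (bs i) = k" "\<And>i. length (bs' i) = k"
    and "blocks_word k bs = blocks_word k bs'"
  shows "bs = bs'"
proof
  fix i
  show "bs i = bs' i"
    using block_blocks_word[of bs i k] block_blocks_word[of bs' i k] assms by metis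
qed

lemma blocks_word_frequently_True:
  assumes "0 < k" "\<And>i. length (bs i) = k" "\<forall>n. \<exists>p\<ge>n. True \<in> set (bs p)"
  shows "\<forall>n. \<exists>m\<ge>n. blocks_word k bs m"
proof
  fix n
  obtain p where "p \<ge> n" "True \<in> set (bs p)" using assms(3) by blast
  then obtain j where "j < k" "bs p ! j" using assms(2) by (metis in_set_conv_nth)
  moreover have "1 * p \<le> k * p" using \<open>0 < k\<close> by (intro mult_le_mono1) simp
  then have "n \<le> k * p + j" using \<open>p \<ge> n\<close> by linarith
  ultimately show "\<exists>m\<ge>n. blocks_word k bs m" using blocks_word_nth by metis
qed

definition pad_blocks :: "'a \<Rightarrow> (nat \<Rightarrow> 'a) \<Rightarrow> (nat \<Rightarrow> bool) \<Rightarrow> nat \<Rightarrow> 'a" where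
  "pad_blocks e b c n = (if odd n \<longleftrightarrow> c (n div 2) then b (n div 2) else e)"

lemma pad_blocks_even [simp]: "pad_blocks e b c (2 * j) = (if c j then e else b j)"
  by (simp add: pad_blocks_def)

lemma pad_blocks_odd [simp]: "pad_blocks e b c (Suc (2 * j)) = (if c j then b j else e)"
  by (simp add: pad_blocks_def)

lemma concat_word_pad_blocks:
  assumes "\<sigma> e = []"
  shows "concat_word (\<lambda>i. \<sigma> (pad_blocks e b c i)) = concat_word (\<lambda>i. \<sigma> (b i))"
proof (rule concat_word_regroup)
  show "j \<le> 2 * j" for j :: nat by simp
  show "concat_prefix (\<lambda>i. \<sigma> (pad_blocks e b c i)) (2 * j) = concat_prefix (\<lambda>i. \<sigma> (b i)) j" for j
  proof (induction j)
    case 0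
    then show ?case by (simp add: concat_prefix_def)
  next
    case (Suc j)
    have "2 * Suc j = Suc (Suc (2 * j))" by simp
    then show ?case
      using Suc assms by (simp only: concat_prefix_Suc pad_blocks_even pad_blocks_odd) simp
  qed
qed

lemma inj_pad_blocks:
  assumes "\<And>j. b j \<noteq> e"
  shows "inj (pad_blocks e b)"
proof (rule injI, rule ext)
  fix c c' j
  assume "pad_blocks e b c = pad_blocks e b c'"
  then have "pad_blocks e b c (2 * j) = pad_blocks e b c' (2 * j)" by simp
  then show "c j = c' j" using assms[of j] by (auto split: if_splits)
qed

lemma pad_blocks_neq_const:
  assumes "b 0 \<noteq> e"
  shows "pad_blocks e b c \<noteq> (\<lambda>_. e)"
proof
  assume "pad_blocks e b c = (\<lambda>_. e)"
  then have "pad_blocks e b c 0 = e" "pad_blocks e b c 1 = e"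
    by simp_all
  then show False using assms by (auto simp: pad_blocks_def split: if_splits)
qed

lemma replicate_False_if_True_notin: "True \<notin> set xs \<Longrightarrow> xs = replicate (length xs) False"
  by (induction xs) auto

lemma pad_blocks_frequently_True:
  assumes "\<And>j. length (b j) = length e" "\<And>j. b j \<noteq> e"
  shows "\<forall>n. \<exists>p\<ge>n. True \<in> set (pad_blocks e b c p)"
proof
  fix n
  have "True \<in> set (b n) \<or> True \<in> set e"
  proof (rule ccontr)
    assume "\<not> ?thesis"
    then have "b n = e"
      using replicate_False_if_True_notin[of "b n"] replicate_False_if_True_notin[of e] assms(1)[of n]
      by simp
    then show False using assms(2) by blast
  qed
  then have "True \<in> set (pad_blocks e b c (2 * n)) \<or> True \<in> set (pad_blocks e b c (Suc (2 * n)))"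
    by (cases "c n") auto
  then show "\<exists>p\<ge>n. True \<in> set (pad_blocks e b c p)"
  proof
    assume "True \<in> set (pad_blocks e b c (2 * n))"
    then show ?thesis by (intro exI[of _ "2 * n"]) simp
  next
    assume "True \<in> set (pad_blocks e b c (Suc (2 * n)))"
    then show ?thesis by (intro exI[of _ "Suc (2 * n)"]) simp
  qed
qed

lemma w_eps_erased:
  assumes "erasing_block_subst k \<sigma>"
  shows "length (w_eps k \<sigma>) = k" "\<sigma> (w_eps k \<sigma>) = []"
  using theI'[of "\<lambda>w. length w = k \<and> \<sigma> w = []"] assms
  unfolding erasing_block_subst_def w_eps_def by auto

locale nonerasing_factorization =
  fixes k :: nat and \<sigma> :: "bool list \<Rightarrow> bool list" and b :: "nat \<Rightarrow> bool list"
  assumes erasing: "erasing_block_subst k \<sigma>"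
    and block_length: "\<And>i. length (b i) = k"
    and nonerased: "\<And>i. \<sigma> (b i) \<noteq> []"
begin

definition padded_word :: "(nat \<Rightarrow> bool) \<Rightarrow> nat \<Rightarrow> bool" where
  "padded_word c = blocks_word k (pad_blocks (w_eps k \<sigma>) b c)"

lemma block_neq_w_eps: "b j \<noteq> w_eps k \<sigma>"
  using nonerased w_eps_erased[OF erasing] by metis

lemma pad_blocks_length: "length (pad_blocks (w_eps k \<sigma>) b c i) = k"
  using block_length w_eps_erased[OF erasing] by (simp add: pad_blocks_def)

lemma padded_word_frequently_True: "\<forall>n. \<exists>m\<ge>n. padded_word c m"
proof -
  have "0 < k" using erasing by (simp add: erasing_block_subst_def)
  then show ?thesis
    unfolding padded_word_def
    using pad_blocks_length block_length w_eps_erased[OF erasing] block_neq_w_eps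
    by (intro blocks_word_frequently_True pad_blocks_frequently_True) auto
qed

lemma binexp_bval_padded_word: "binexp (bval (padded_word c)) = padded_word c"
  using binexp_bval[OF padded_word_frequently_True] .

lemma inj_bval_padded_word: "inj (\<lambda>c. bval (padded_word c))"
proof (rule injI)
  fix c c'
  assume "bval (padded_word c) = bval (padded_word c')"
  then have "padded_word c = padded_word c'" using binexp_bval_padded_word by metis
  then have "pad_blocks (w_eps k \<sigma>) b c = pad_blocks (w_eps k \<sigma>) b c'"
    unfolding padded_word_def by (rule blocks_word_inject[OF pad_blocks_length pad_blocks_length])
  then show "c = c'" using inj_pad_blocks[OF block_neq_w_eps] by (simp add: inj_eq)
qed

lemma bval_padded_word_in_fiber:
  "bval (padded_word c) \<in> {y\<in>{0..1}. f_sigma k \<sigma> y = bval (concat_word (\<lambda>i. \<sigma> (b i)))}"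
proof -
  have "0 < bval (padded_word c)" using padded_word_frequently_True bval_pos by blast
  moreover have "padded_word c \<noteq> (\<lambda>n. w_eps k \<sigma> ! (n mod k))"
    using blocks_word_inject[of "pad_blocks (w_eps k \<sigma>) b c" k "\<lambda>_. w_eps k \<sigma>"]
      pad_blocks_length w_eps_erased[OF erasing] pad_blocks_neq_const[OF block_neq_w_eps]
    unfolding padded_word_def blocks_word_def by auto
  moreover have "subst_inf k \<sigma> (padded_word c) = concat_word (\<lambda>i. \<sigma> (b i))"
    unfolding padded_word_def subst_inf_blocks_word[OF pad_blocks_length]
    by (rule concat_word_pad_blocks[of \<sigma>, OF w_eps_erased(2)[OF erasing]])
  ultimately show ?thesis
    using bval_le_1 binexp_bval_padded_word by (simp add: f_sigma_def)
qed

lemma uncountable_fiber: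
  "uncountable {y\<in>{0..1}. f_sigma k \<sigma> y = bval (concat_word (\<lambda>i. \<sigma> (b i)))}"
proof -
  have "uncountable (range (\<lambda>c. bval (padded_word c)))"
    using uncountable_UNIV_nat_bool countable_image_inj_on inj_bval_padded_word by blast
  then show ?thesis
    using bval_padded_word_in_fiber countable_subset[of "range (\<lambda>c. bval (padded_word c))"]
    by blast
qed

end

theorem corollary1:
  fixes k :: nat and \<sigma> :: "bool list \<Rightarrow> bool list"
  assumes "erasing_block_subst k \<sigma>"
    and "w_eps k \<sigma> \<noteq> replicate k True"
    and "optimal k \<sigma>"
  shows "\<forall>x\<in>{0..1::real}. uncountable {y\<in>{0..1}. f_sigma k \<sigma> y = x}"
proof
  fix x :: real
  assume "x \<in> {0..1}"
  then obtain w where "bval w = x" using ex_bval_eq by auto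
  moreover obtain b where "\<And>i. length (b i) = k" "\<And>i. \<sigma> (b i) \<noteq> []"
    and "w = concat_word (\<lambda>i. \<sigma> (b i))"
    using assms(3) unfolding optimal_def by blast
  ultimately show "uncountable {y\<in>{0..1}. f_sigma k \<sigma> y = x}"
    using nonerasing_factorization.uncountable_fiber[of k \<sigma> b] assms(1)
    by (simp add: nonerasing_factorization_def)
qed

end
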